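(* For $k\ge0$ write $3^k=\sum_{i\ge0}\omega_i(k)2^i$ with $\omega_i(k)\in\{0,1\}$ (the binary expansion), and let $A_k=\{i\ge0:\omega_i(k)=1\}$. Let \[ W=\{k\in\mathbb{N}: A_k \text{ contains no 3-term arithmetic progression}\}. \] Then for every $\varepsilon>0$, $\#(W\cap[1,N])=O_\varepsilon(N^{\varepsilon})$.
   Context: A 3-term arithmetic progression in a set $A$ of integers means $a,a+d,a+2d\in A$ with $d\ge1$. *)

theory Defs
  imports Complex_Main
begin

definition omega :: "nat \<Rightarrow> nat \<Rightarrow> nat" where
  "omega i k = (3 ^ k div 2 ^ i) mod 2"

definition A_set :: "nat \<Rightarrow> nat set" where
  "A_set k = {i. omega i k = 1}"

definition has_3AP :: "nat set \<Rightarrow> bool" where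
  "has_3AP A \<longleftrightarrow> (\<exists>a d. d \<ge> 1 \<and> a \<in> A \<and> a + d \<in> A \<and> a + 2 * d \<in> A)"

definition W_set :: "nat set" where
  "W_set = {k. \<not> has_3AP (A_set k)}"

end

theory Submission
  imports Defs
begin

text \<open>Since \<open>3\<close> has order \<open>2 ^ a\<close> modulo \<open>2 ^ (a + 2)\<close>, the lowest \<open>a + 2\<close> binary digits
  of \<open>3 ^ k\<close> determine \<open>k\<close> among \<open>2 ^ a\<close> consecutive exponents. For \<open>k \<in> W\<close> these digits
  form a subset of \<open>{0..<a + 2}\<close> without 3-term progressions, so with \<open>2 ^ a \<approx> N\<close> it
  suffices to count such subsets of \<open>{0..<m}\<close>. By Roth's theorem they have density
  \<open>o(1)\<close>, so a binomial estimate bounds their number by \<open>2 ^ (\<epsilon> L)\<close> for one suitable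
  length \<open>L\<close>, and splitting \<open>{0..<m}\<close> into blocks of length \<open>L\<close> gives \<open>O(2 ^ (\<epsilon> m))\<close>.
  Roth's theorem is proved along Szemer\'edi's combinatorial route, by a density increment
  built on Hilbert cubes.\<close>

section \<open>Binary digits of powers of 3\<close>

lemma three_pow_two_pow: "\<exists>w. odd w \<and> (3::nat) ^ 2 ^ (a + 1) = 1 + 2 ^ (a + 3) * w"
proof (induction a)
  case 0
  show ?case by (rule exI[of _ 1]) simp
next
  case (Suc a)
  then obtain w where w: "odd w" "(3::nat) ^ 2 ^ (a + 1) = 1 + 2 ^ (a + 3) * w" by blast
  have "(3::nat) ^ 2 ^ (Suc a + 1) = (3 ^ 2 ^ (a + 1))\<^sup>2"
    by (simp add: power_mult[symmetric] mult.commute)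
  also have "\<dots> = (1 + 2 ^ (a + 3) * w)\<^sup>2" by (simp only: w(2))
  also have "\<dots> = 1 + 2 ^ (Suc a + 3) * (w + 2 ^ (a + 2) * w\<^sup>2)"
    by (simp add: power2_eq_square algebra_simps power_add)
  finally show ?case using w(1) by (intro exI[of _ "w + 2 ^ (a + 2) * w\<^sup>2"]) auto
qed

lemma one_plus_two_pow_power:
  assumes "b \<ge> 1"
  shows "\<exists>r. ((1::nat) + 2 ^ b * w) ^ u = 1 + u * 2 ^ b * w + 2 ^ (b + 1) * r"
proof (induction u)
  case 0
  show ?case by simp
next
  case (Suc u)
  then obtain r where r: "((1::nat) + 2 ^ b * w) ^ u = 1 + u * 2 ^ b * w + 2 ^ (b + 1) * r" by blast
  obtain c where c: "b = Suc c" using assms by (cases b) auto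
  have "((1::nat) + 2 ^ b * w) ^ Suc u = (1 + u * 2 ^ b * w + 2 ^ (b + 1) * r) * (1 + 2 ^ b * w)"
    using r by simp
  also have "\<dots> = 1 + Suc u * 2 ^ b * w + 2 ^ (b + 1) * (r + u * w * w * 2 ^ c + 2 ^ b * r * w)"
    by (simp add: c algebra_simps power_add)
  finally show ?case by blast
qed

lemma not_two_pow_dvd_power_minus_one:
  assumes "b \<ge> 1" "odd w" "odd u"
  shows "\<not> 2 ^ (b + 1) dvd ((1::nat) + 2 ^ b * w) ^ u - 1"
proof
  assume dvd: "2 ^ (b + 1) dvd ((1::nat) + 2 ^ b * w) ^ u - 1"
  obtain r where r: "((1::nat) + 2 ^ b * w) ^ u = 1 + u * 2 ^ b * w + 2 ^ (b + 1) * r"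
    using one_plus_two_pow_power[OF assms(1)] by blast
  have "2 ^ b * 2 dvd 2 ^ b * (u * w) + 2 ^ (b + 1) * r"
    using dvd r by (simp add: ac_simps)
  then have "2 ^ b * 2 dvd 2 ^ b * (u * w)"
    by (simp add: dvd_add_left_iff)
  then have "2 dvd u * w" by simp
  with assms show False by simp
qed

text \<open>The multiplicative order of 3 modulo \<open>2 ^ (m + 2)\<close> is \<open>2 ^ m\<close>; only the
  divisibility half of this is needed.\<close>

lemma two_pow_dvd_three_pow_minus_one:
  "2 ^ (m + 2) dvd (3::nat) ^ j - 1 \<Longrightarrow> 2 ^ m dvd j"
proof (induction m arbitrary: j)
  case 0
  show ?case by simp
next
  case (Suc m)
  have "2 ^ (m + 2) dvd (3::nat) ^ j - 1"
    using Suc.prems by (rule dvd_trans[rotated]) (simp add: le_imp_power_dvd)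
  then obtain u where u: "j = 2 ^ m * u" using Suc.IH by blast
  show ?case
  proof (cases "even u")
    case True
    then show ?thesis using u by auto
  next
    case False
    have j: "(3::nat) ^ j = (3 ^ 2 ^ m) ^ u" using u by (simp add: power_mult)
    obtain b w where bw: "b \<ge> 1" "odd w" "(3::nat) ^ 2 ^ m = 1 + 2 ^ b * w" "b + 1 \<le> Suc m + 2"
    proof (cases m)
      case 0
      then show ?thesis using that[of 1 1] by simp
    next
      case (Suc a)
      then show ?thesis using three_pow_two_pow[of a] that[of "a + 3"] by auto
    qed
    have "2 ^ (b + 1) dvd (3::nat) ^ j - 1"
      using le_imp_power_dvd[OF bw(4)] Suc.prems by (rule dvd_trans)
    then show ?thesis
      using not_two_pow_dvd_power_minus_one[OF bw(1,2) False] unfolding j bw(3) by blast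
  qed
qed

lemma three_pow_mod_two_pow_inj:
  assumes mod_eq: "(3::nat) ^ k mod 2 ^ (a + 2) = 3 ^ k' mod 2 ^ (a + 2)"
    and "k \<le> k'" "k' - k < 2 ^ a"
  shows "k = k'"
proof -
  have "2 ^ (a + 2) dvd (3::nat) ^ k' - 3 ^ k"
    using mod_eq[symmetric] by (simp add: mod_eq_dvd_iff_nat assms(2))
  also have "(3::nat) ^ k' - 3 ^ k = 3 ^ k * (3 ^ (k' - k) - 1)"
    using assms(2) by (simp add: diff_mult_distrib2 power_add[symmetric])
  finally have "2 ^ (a + 2) dvd (3::nat) ^ (k' - k) - 1"
    by (metis coprime_dvd_mult_right_iff coprime_power_left_iff coprime_power_right_iff
        coprime_Suc_right_nat numeral_2_eq_2 numeral_3_eq_3)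
  then have "2 ^ a dvd k' - k" by (rule two_pow_dvd_three_pow_minus_one)
  with assms(3) have "k' - k = 0" by (meson dvd_imp_le not_less neq0_conv)
  with assms(2) show ?thesis by simp
qed

lemma A_set_eq_bits: "A_set k = {i. bit ((3::nat) ^ k) i}"
  by (simp add: A_set_def omega_def bit_iff_odd odd_iff_mod_2_eq_one)

lemma three_pow_mod_eq_if_A_set_prefix_eq:
  assumes "A_set k \<inter> {0..<m} = A_set k' \<inter> {0..<m}"
  shows "(3::nat) ^ k mod 2 ^ m = 3 ^ k' mod 2 ^ m"
proof -
  have "take_bit m ((3::nat) ^ k) = take_bit m (3 ^ k')"
  proof (rule bit_eqI)
    fix i
    have "i < m \<Longrightarrow> bit ((3::nat) ^ k) i = bit ((3::nat) ^ k') i"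
      using assms[unfolded set_eq_iff, rule_format, of i] by (simp add: A_set_eq_bits)
    then show "bit (take_bit m ((3::nat) ^ k)) i = bit (take_bit m ((3::nat) ^ k')) i"
      by (cases "i < m") (simp_all add: bit_take_bit_iff)
  qed
  then show ?thesis by (simp add: take_bit_eq_mod)
qed

lemma inj_on_A_set_prefix: "inj_on (\<lambda>k. A_set k \<inter> {0..<a + 2}) {b..<b + 2 ^ a}"
proof -
  have "k = k'" if "k \<in> {b..<b + 2 ^ a}" "k' \<in> {b..<b + 2 ^ a}" "k \<le> k'"
    and "A_set k \<inter> {0..<a + 2} = A_set k' \<inter> {0..<a + 2}" for k k'
    using three_pow_mod_two_pow_inj[OF three_pow_mod_eq_if_A_set_prefix_eq[OF that(4)] that(3)] that(1,2)
    by auto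
  then show ?thesis by (intro inj_onI) (metis linorder_le_cases)
qed

section \<open>Sets without 3-term progressions\<close>

definition ap_free_sets :: "nat \<Rightarrow> nat set set" where
  "ap_free_sets n = {S. S \<subseteq> {0..<n} \<and> \<not> has_3AP S}"

lemma has_3AP_mono: "has_3AP S \<Longrightarrow> S \<subseteq> T \<Longrightarrow> has_3AP T"
  unfolding has_3AP_def by blast

lemma has_3AP_affine_preimage:
  assumes "has_3AP {t. a + s * t \<in> A}" "s \<ge> 1"
  shows "has_3AP A"
proof -
  obtain x d where "d \<ge> 1" "a + s * x \<in> A" "a + s * (x + d) \<in> A" "a + s * (x + 2 * d) \<in> A"
    using assms(1) unfolding has_3AP_def by blast
  then have "s * d \<ge> 1 \<and> a + s * x \<in> A \<and> (a + s * x) + s * d \<in> A \<and> (a + s * x) + 2 * (s * d) \<in> A"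
    using assms(2) by (simp add: algebra_simps)
  then show ?thesis unfolding has_3AP_def by blast
qed

lemma finite_ap_free_sets: "finite (ap_free_sets n)"
  by (rule finite_subset[of _ "Pow {0..<n}"]) (auto simp: ap_free_sets_def)

lemma card_ap_free_sets_mono: "m \<le> n \<Longrightarrow> card (ap_free_sets m) \<le> card (ap_free_sets n)"
  by (rule card_mono[OF finite_ap_free_sets]) (auto simp: ap_free_sets_def)

lemma card_ap_free_sets_add:
  "card (ap_free_sets (a + b)) \<le> card (ap_free_sets a) * card (ap_free_sets b)"
proof -
  define split where "split S = (S \<inter> {0..<a}, {t. t < b \<and> a + 1 * t \<in> S})" for S
  have recover: "S = fst (split S) \<union> (\<lambda>t. a + t) ` snd (split S)" if "S \<subseteq> {0..<a + b}" for S
  proof (intro equalityI subsetI)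
    fix x assume x: "x \<in> S"
    show "x \<in> fst (split S) \<union> (\<lambda>t. a + t) ` snd (split S)"
    proof (cases "x < a")
      case False
      then have "x = a + (x - a)" "x - a < b" using x that by auto
      then show ?thesis using x unfolding split_def by (simp add: image_iff) metis
    qed (use x in \<open>simp add: split_def\<close>)
  qed (auto simp: split_def)
  have inj: "inj_on split (ap_free_sets (a + b))"
  proof (rule inj_onI)
    fix S T assume "S \<in> ap_free_sets (a + b)" "T \<in> ap_free_sets (a + b)" "split S = split T"
    then show "S = T" using recover[of S] recover[of T] by (simp add: ap_free_sets_def)
  qed
  have maps: "split S \<in> ap_free_sets a \<times> ap_free_sets b" if "S \<in> ap_free_sets (a + b)" for S
  proof -
    have free: "\<not> has_3AP S" using that by (simp add: ap_free_sets_def)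
    then have "\<not> has_3AP {t. a + 1 * t \<in> S}" using has_3AP_affine_preimage by blast
    then have "\<not> has_3AP {t. t < b \<and> a + 1 * t \<in> S}" by (rule contrapos_nn) (erule has_3AP_mono, blast)
    moreover have "\<not> has_3AP (S \<inter> {0..<a})" using free by (rule contrapos_nn) (erule has_3AP_mono, blast)
    ultimately show ?thesis unfolding split_def ap_free_sets_def by auto
  qed
  have "card (ap_free_sets (a + b)) \<le> card (ap_free_sets a \<times> ap_free_sets b)"
    by (rule card_inj_on_le[OF inj]) (use maps in blast, simp add: finite_ap_free_sets)
  then show ?thesis by (simp add: card_cartesian_product)
qed

lemma card_ap_free_sets_mult: "card (ap_free_sets (q * L)) \<le> card (ap_free_sets L) ^ q"
proof (induction q)
  case 0
  have "ap_free_sets 0 = {{}}" unfolding ap_free_sets_def has_3AP_def by auto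
  then show ?case by simp
next
  case (Suc q)
  have "card (ap_free_sets (Suc q * L)) \<le> card (ap_free_sets L) * card (ap_free_sets (q * L))"
    using card_ap_free_sets_add[of L "q * L"] by simp
  also have "\<dots> \<le> card (ap_free_sets L) ^ Suc q" using Suc.IH by simp
  finally show ?case .
qed

lemma card_ap_preimage_le:
  fixes \<beta> :: real
  assumes bound: "\<forall>S\<in>ap_free_sets L. real (card S) \<le> \<beta> * L"
    and A: "\<not> has_3AP A" and s: "s \<ge> 1"
  shows "real (card {t. t < L \<and> u + s * t \<in> A}) \<le> \<beta> * L"
proof -
  have "\<not> has_3AP {t. u + s * t \<in> A}"
    using A s has_3AP_affine_preimage by blast
  then have "\<not> has_3AP {t. t < L \<and> u + s * t \<in> A}"
    by (rule contrapos_nn) (erule has_3AP_mono, blast)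
  then have "{t. t < L \<and> u + s * t \<in> A} \<in> ap_free_sets L"
    by (auto simp: ap_free_sets_def)
  then show ?thesis using bound by blast
qed

lemma card_Int_ivl_split:
  fixes A :: "nat set"
  assumes "a \<le> b" "b \<le> c"
  shows "card (A \<inter> {a..<c}) = card (A \<inter> {a..<b}) + card (A \<inter> {b..<c})"
proof -
  have "A \<inter> {a..<c} = A \<inter> {a..<b} \<union> A \<inter> {b..<c}" using assms by auto
  then show ?thesis by (simp add: card_Un_disjoint disjoint_iff)
qed

lemma card_inter_interval_le:
  fixes \<beta> :: real
  assumes bound: "\<forall>L\<ge>L0. \<forall>S\<in>ap_free_sets L. real (card S) \<le> \<beta> * L"
    and A: "\<not> has_3AP A" and \<beta>: "\<beta> \<ge> 0"
  shows "real (card (A \<inter> {a..<a + L})) \<le> \<beta> * L + L0"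
proof -
  have "A \<inter> {a..<a + L} = (\<lambda>t. a + t) ` {t. t < L \<and> a + 1 * t \<in> A}"
  proof (intro equalityI subsetI)
    fix x assume "x \<in> A \<inter> {a..<a + L}"
    then have "x = a + (x - a) \<and> x - a < L \<and> a + 1 * (x - a) \<in> A" by auto
    then show "x \<in> (\<lambda>t. a + t) ` {t. t < L \<and> a + 1 * t \<in> A}" by blast
  qed auto
  then have "card (A \<inter> {a..<a + L}) = card {t. t < L \<and> a + 1 * t \<in> A}"
    by (simp add: card_image)
  moreover have "card {t. t < L \<and> a + 1 * t \<in> A} \<le> L"
    using card_mono[of "{..<L}" "{t. t < L \<and> a + 1 * t \<in> A}"] by auto
  moreover have "L \<ge> L0 \<Longrightarrow> real (card {t. t < L \<and> a + 1 * t \<in> A}) \<le> \<beta> * L"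
    using bound A card_ap_preimage_le[of L \<beta> A 1] by blast
  ultimately show ?thesis using \<beta> by (cases "L \<ge> L0") (auto intro: add_increasing)
qed

section \<open>Roth's theorem\<close>

lemma card_not_translate_mult_le:
  assumes "finite D"
  shows "card {z\<in>D. z + t * s \<notin> D} \<le> t * card {z\<in>D. z + s \<notin> D}"
proof (induction t)
  case 0
  show ?case by simp
next
  case (Suc t)
  let ?exits = "{z\<in>D. z + t * s \<in> D \<and> z + t * s + s \<notin> D}"
  have cover: "{z\<in>D. z + Suc t * s \<notin> D} \<subseteq> {z\<in>D. z + t * s \<notin> D} \<union> ?exits"
    by (auto simp: algebra_simps)
  have "card {z\<in>D. z + Suc t * s \<notin> D} \<le> card ({z\<in>D. z + t * s \<notin> D} \<union> ?exits)"
    by (rule card_mono[OF _ cover]) (simp add: assms)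
  also have "\<dots> \<le> card {z\<in>D. z + t * s \<notin> D} + card ?exits"
    by (rule card_Un_le)
  also have "card ?exits \<le> card {z\<in>D. z + s \<notin> D}"
  proof -
    have "card ?exits = card ((\<lambda>z. z + t * s) ` ?exits)"
      by (simp add: card_image inj_on_def)
    also have "\<dots> \<le> card {z\<in>D. z + s \<notin> D}"
      by (rule card_mono) (use assms in auto)
    finally show ?thesis .
  qed
  finally show ?case using Suc.IH by simp
qed

lemma card_le_translate_count:
  assumes A: "A \<subseteq> {0..<n}" and D: "D \<subseteq> {0..<n}" and disj: "A \<inter> D = {}"
  shows "card A \<le> card {u\<in>{0..<n} - D. u + s * t \<in> A} + s * t + t * card {z\<in>D. z + s \<notin> D}"
proof -
  let ?inside = "{u\<in>{0..<n} - D. u + s * t \<in> A}"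
  let ?exits = "{z\<in>D. z + t * s \<notin> D}"
  have fin: "finite D" "finite A" using A D finite_subset by auto
  have "A \<subseteq> (\<lambda>u. u + s * t) ` ?inside \<union> {..<s * t} \<union> (\<lambda>z. z + t * s) ` ?exits"
  proof
    fix x assume x: "x \<in> A"
    show "x \<in> (\<lambda>u. u + s * t) ` ?inside \<union> {..<s * t} \<union> (\<lambda>z. z + t * s) ` ?exits"
    proof (cases "x < s * t")
      case False
      then have "x = (x - s * t) + s * t" "x - s * t < n" using x A by auto
      moreover have "x \<notin> D" using x disj by blast
      ultimately show ?thesis using x by (cases "x - s * t \<in> D") (auto simp: image_iff mult.commute)
    qed simp
  qed
  then have "card A \<le> card ((\<lambda>u. u + s * t) ` ?inside \<union> {..<s * t} \<union> (\<lambda>z. z + t * s) ` ?exits)"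
    by (rule card_mono[rotated]) (use fin in auto)
  also have "\<dots> \<le> card ?inside + card {..<s * t} + card ?exits"
    by (intro card_Un_le[THEN order_trans] add_mono card_image_le) (auto simp: fin)
  also have "card ?exits \<le> t * card {z\<in>D. z + s \<notin> D}"
    by (rule card_not_translate_mult_le[OF fin(1)])
  finally show ?thesis by simp
qed

text \<open>Double counting over the progressions \<open>u, u + s, \<dots>, u + (l - 1) s\<close> with \<open>u \<notin> D\<close>:
  by the previous lemma they miss only few points of \<open>A\<close>, and each meets \<open>A\<close> in at most
  \<open>\<beta> l\<close> points.\<close>

lemma card_avoiding_nearly_invariant_le:
  fixes \<beta> :: real
  assumes A: "A \<subseteq> {0..<n}" and D: "D \<subseteq> {0..<n}" and disj: "A \<inter> D = {}" and l: "l \<ge> 1"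
    and bound: "\<And>u. real (card {t. t < l \<and> u + s * t \<in> A}) \<le> \<beta> * l"
  shows "real (card A) \<le> \<beta> * (real n - card D) + l * (s + card {z\<in>D. z + s \<notin> D})"
proof -
  define U where "U = {0..<n} - D"
  define e where "e = card {z\<in>D. z + s \<notin> D}"
  have "card D \<le> n" using card_mono[OF _ D] by simp
  then have card_U: "real (card U) = real n - card D"
    using D finite_subset[OF D] by (simp add: U_def card_Diff_subset of_nat_diff)
  have "real l * card A \<le> (\<Sum>t<l. real (card {u\<in>U. u + s * t \<in> A}) + l * (s + e))"
  proof -
    have "real (card A) \<le> real (card {u\<in>U. u + s * t \<in> A}) + l * (s + e)" if "t < l" for t
    proof -
      have "card A \<le> card {u\<in>U. u + s * t \<in> A} + s * t + t * e"
        using card_le_translate_count[OF A D disj, of s t] unfolding U_def e_def by simp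
      then have "real (card A) \<le> real (card {u\<in>U. u + s * t \<in> A}) + s * t + t * e"
        by (metis of_nat_add of_nat_mult of_nat_mono)
      moreover have "real s * t \<le> s * l" "real t * e \<le> l * e"
        using that by (simp_all add: mult_left_mono mult_right_mono)
      ultimately show ?thesis by (simp add: distrib_left mult.commute)
    qed
    then show ?thesis using sum_mono[of "{..<l}" "\<lambda>_. real (card A)"] by simp
  qed
  also have "\<dots> = (\<Sum>u\<in>U. real (card {t. t < l \<and> u + s * t \<in> A})) + l * (l * (s + e))"
  proof -
    have "(\<Sum>t<l. real (card {u\<in>U. u + s * t \<in> A})) = (\<Sum>t<l. \<Sum>u\<in>U. of_bool (u + s * t \<in> A))"
      by (simp add: U_def Int_def)
    also have "\<dots> = (\<Sum>u\<in>U. \<Sum>t<l. of_bool (u + s * t \<in> A))" by (rule sum.swap)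
    also have "\<dots> = (\<Sum>u\<in>U. real (card {t. t < l \<and> u + s * t \<in> A}))"
      by (simp add: U_def Int_def lessThan_def)
    finally show ?thesis by (simp add: sum.distrib)
  qed
  also have "\<dots> \<le> card U * (\<beta> * l) + l * (l * (s + e))"
    using sum_bounded_above[of U "\<lambda>u. real (card {t. t < l \<and> u + s * t \<in> A})", OF bound] by simp
  finally have "real l * card A \<le> real l * (\<beta> * card U + l * (s + e))"
    by (simp add: algebra_simps)
  then show ?thesis using l card_U unfolding e_def by (simp add: mult_le_cancel_left_pos)
qed

lemma card_sq_le_twice_ordered_pairs:
  fixes B :: "'a::linorder set"
  assumes "finite B"
  shows "(card B)\<^sup>2 \<le> 2 * card {(x, y) \<in> B \<times> B. x \<le> y}"
proof -
  let ?P = "{(x, y) \<in> B \<times> B. x \<le> y}"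
  have fin: "finite ?P" by (rule finite_subset[of _ "B \<times> B"]) (auto simp: assms)
  have "B \<times> B \<subseteq> ?P \<union> prod.swap ` ?P" by (auto simp: image_iff)
  then have "card (B \<times> B) \<le> card (?P \<union> prod.swap ` ?P)"
    by (rule card_mono[rotated]) (use fin in simp)
  also have "\<dots> \<le> card ?P + card (prod.swap ` ?P)" by (rule card_Un_le)
  also have "card (prod.swap ` ?P) \<le> card ?P" by (rule card_image_le[OF fin])
  finally show ?thesis by (simp add: card_cartesian_product power2_eq_square)
qed

lemma card_ordered_pairs_eq_sum_differences:
  fixes B :: "nat set"
  assumes B: "B \<subseteq> {a..<a + M}"
  shows "card {(x, y) \<in> B \<times> B. x \<le> y} = (\<Sum>d<M. card {x\<in>B. x + d \<in> B})"
proof -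
  have fin: "finite B" using B finite_subset by blast
  have "{(x, y) \<in> B \<times> B. x \<le> y} = (\<Union>d<M. (\<lambda>x. (x, x + d)) ` {x\<in>B. x + d \<in> B})"
  proof (intro equalityI subsetI)
    fix p assume "p \<in> {(x, y) \<in> B \<times> B. x \<le> y}"
    then obtain x y where p: "p = (x, y)" "x \<in> B" "y \<in> B" "x \<le> y" by blast
    have "a \<le> x" "y < a + M" using p(2,3) B by auto
    then have "y - x < M" using p(4) by arith
    moreover have "p \<in> (\<lambda>z. (z, z + (y - x))) ` {z\<in>B. z + (y - x) \<in> B}"
      by (rule image_eqI[of _ _ x]) (use p in auto)
    ultimately show "p \<in> (\<Union>d<M. (\<lambda>x. (x, x + d)) ` {x\<in>B. x + d \<in> B})" by blast
  qed auto
  also have "card \<dots> = (\<Sum>d<M. card ((\<lambda>x. (x, x + d)) ` {x\<in>B. x + d \<in> B}))"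
    by (rule card_UN_disjoint) (use fin in auto)
  also have "\<dots> = (\<Sum>d<M. card {x\<in>B. x + d \<in> B})"
    by (intro sum.cong refl card_image) (simp add: inj_on_def)
  finally show ?thesis .
qed

text \<open>There are at least \<open>|B|\<^sup>2 / 2\<close> ordered pairs in \<open>B\<close>, and the difference \<open>0\<close>
  accounts for only \<open>|B| \<le> |B|\<^sup>2 / 4\<close> of them.\<close>

lemma exists_popular_difference:
  fixes B :: "nat set"
  assumes B: "B \<subseteq> {a..<a + M}" and card_B: "card B \<ge> 4"
  shows "\<exists>d. 1 \<le> d \<and> d < M \<and> (card B)\<^sup>2 \<le> 4 * M * card {x\<in>B. x + d \<in> B}"
proof (rule ccontr)
  assume no_popular: "\<not> ?thesis"
  let ?c = "\<lambda>d. card {x\<in>B. x + d \<in> B}"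
  have fin: "finite B" using B finite_subset by blast
  have "M > 0" using B card_B by (cases M) auto
  then have "{..<M} = insert 0 {1..<M}" by auto
  then have "(card B)\<^sup>2 \<le> 2 * (card B + (\<Sum>d\<in>{1..<M}. ?c d))"
    using card_sq_le_twice_ordered_pairs[OF fin] card_ordered_pairs_eq_sum_differences[OF B] by simp
  moreover have "4 * card B \<le> (card B)\<^sup>2"
    using mult_right_mono[OF card_B, of "card B"] by (simp add: power2_eq_square)
  ultimately have "(card B)\<^sup>2 \<le> 4 * (\<Sum>d\<in>{1..<M}. ?c d)" by simp
  then have "M * (card B)\<^sup>2 \<le> M * (4 * (\<Sum>d\<in>{1..<M}. ?c d))" by simp
  also have "\<dots> = (\<Sum>d\<in>{1..<M}. 4 * M * ?c d)" by (simp add: sum_distrib_left mult_ac)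
  also have "\<dots> \<le> (\<Sum>d\<in>{1..<M}. (card B)\<^sup>2)"
    by (rule sum_mono) (use no_popular in \<open>auto simp: not_le\<close>)
  also have "\<dots> = (M - 1) * (card B)\<^sup>2" by simp
  finally show False using \<open>M > 0\<close> card_B by simp
qed

text \<open>The Hilbert cube \<open>{x + \<Sum>i\<in>I. d i | I \<subseteq> {..<k}}\<close>.\<close>

fun cube :: "nat \<Rightarrow> (nat \<Rightarrow> nat) \<Rightarrow> nat \<Rightarrow> nat set" where
  "cube x d 0 = {x}"
| "cube x d (Suc k) = cube x d k \<union> (\<lambda>z. z + d k) ` cube x d k"

lemma finite_cube: "finite (cube x d k)"
  by (induction k) auto

lemma cube_cong: "(\<And>i. i < k \<Longrightarrow> d i = d' i) \<Longrightarrow> cube x d k = cube x d' k"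
  by (induction k) auto

lemma cube_mono: "j \<le> k \<Longrightarrow> cube x d j \<subseteq> cube x d k"
  by (induction k) (auto simp: le_Suc_eq)

text \<open>Szemer\'edi's cube lemma. Each step passes to \<open>{x \<in> B. x + d \<in> B}\<close> for a popular
  difference \<open>d\<close>, which squares the density.\<close>

lemma hilbert_cube_lemma:
  fixes \<delta> :: real
  assumes "B \<subseteq> {a..<a + M}" "\<delta> > 0" "real (card B) \<ge> \<delta> * M" "(\<delta> / 4) ^ 2 ^ k * M \<ge> 1"
  shows "\<exists>x d. (\<forall>i<k. 1 \<le> d i \<and> d i < M) \<and> cube x d k \<subseteq> B"
  using assms
proof (induction k arbitrary: \<delta> B)
  case 0
  then have "card B > 0" by simp
  then obtain x where "x \<in> B" by (metis card_gt_0_iff ex_in_conv)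
  then show ?case by auto
next
  case (Suc k)
  note B = Suc.prems(1) and \<delta> = Suc.prems(2-4)
  have "M > 0" using \<delta>(3) by (cases "M = 0") auto
  have "card B \<le> M" using card_mono[OF _ B] by simp
  then have "\<delta> * M \<le> 1 * M" using \<delta>(2) by linarith
  then have "\<delta> \<le> 1" using \<open>M > 0\<close> by (simp add: mult_le_cancel_right)
  then have "(\<delta> / 4) ^ 2 ^ Suc k \<le> (\<delta> / 4) ^ 1"
    using \<delta>(1) by (intro power_decreasing) auto
  then have "(\<delta> / 4) * M \<ge> 1"
    using \<delta>(3) mult_right_mono[of "(\<delta> / 4) ^ 2 ^ Suc k" "\<delta> / 4" "real M"] by simp
  then have "card B \<ge> 4" using \<delta>(2) by linarith
  then obtain d where d: "1 \<le> d" "d < M" "(card B)\<^sup>2 \<le> 4 * M * card {x\<in>B. x + d \<in> B}"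
    using exists_popular_difference[OF B] by blast
  define B' where "B' = {x\<in>B. x + d \<in> B}"
  have "(\<delta> * M)\<^sup>2 \<le> (real (card B))\<^sup>2"
    using \<delta>(1,2) by (intro power_mono) auto
  also have "\<dots> \<le> 4 * M * card B'"
    using d(3) unfolding B'_def by (metis of_nat_le_iff of_nat_power)
  finally have "(4 * M) * (\<delta>\<^sup>2 / 4 * M) \<le> (4 * M) * card B'"
    by (simp add: power2_eq_square mult_ac)
  then have "real (card B') \<ge> \<delta>\<^sup>2 / 4 * M" using \<open>M > 0\<close> by simp
  moreover have "(\<delta>\<^sup>2 / 4 / 4) ^ 2 ^ k = (\<delta> / 4) ^ 2 ^ Suc k"
    by (simp add: power_mult power_divide)
  moreover have "B' \<subseteq> {a..<a + M}" using B unfolding B'_def by auto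
  ultimately obtain x d' where d': "\<forall>i<k. 1 \<le> d' i \<and> d' i < M" "cube x d' k \<subseteq> B'"
    using Suc.IH[of B' "\<delta>\<^sup>2 / 4"] \<delta>(1,3) by auto
  have "cube x (d'(k := d)) k = cube x d' k" by (rule cube_cong) simp
  then have "cube x (d'(k := d)) (Suc k) \<subseteq> B"
    using d'(2) unfolding B'_def by auto
  moreover have "\<forall>i<Suc k. 1 \<le> (d'(k := d)) i \<and> (d'(k := d)) i < M"
    using d'(1) d(1,2) by (simp add: less_Suc_eq)
  ultimately show ?case by blast
qed

lemma card_le_sum_blocks:
  fixes B :: "nat set"
  assumes B: "B \<subseteq> {a..<a + P}" and M: "M \<ge> 1"
  shows "card B \<le> (\<Sum>i<P div M. card (B \<inter> {a + i * M..<a + i * M + M})) + P mod M"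
proof -
  define q where "q = P div M"
  let ?block = "\<lambda>i. B \<inter> {a + i * M..<a + i * M + M}"
  have "B \<subseteq> (\<Union>i<q. ?block i) \<union> {a + q * M..<a + P}"
  proof
    fix x assume x: "x \<in> B"
    show "x \<in> (\<Union>i<q. ?block i) \<union> {a + q * M..<a + P}"
    proof (cases "x < a + q * M")
      case True
      define i where "i = (x - a) div M"
      have "i * M \<le> x - a" "x - a < i * M + M"
        using M div_mult_mod_eq[of "x - a" M] mod_less_divisor[of M "x - a"] unfolding i_def
        by linarith+
      moreover have "a \<le> x" using x B by auto
      then have "i < q" unfolding i_def using True by (intro less_mult_imp_div_less) arith
      ultimately show ?thesis using x B by force
    qed (use x B in auto)
  qed
  then have "card B \<le> card ((\<Union>i<q. ?block i) \<union> {a + q * M..<a + P})"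
    by (rule card_mono[rotated]) simp
  also have "\<dots> \<le> card (\<Union>i<q. ?block i) + card {a + q * M..<a + P}" by (rule card_Un_le)
  also have "\<dots> = card (\<Union>i<q. ?block i) + P mod M"
    using minus_div_mult_eq_mod[of P M] unfolding q_def by simp
  also have "\<dots> \<le> (\<Sum>i<q. card (?block i)) + P mod M"
    by (intro add_right_mono card_UN_le) simp
  finally show ?thesis unfolding q_def .
qed

lemma exists_dense_block:
  fixes \<theta> :: real and P M :: nat
  assumes B: "B \<subseteq> {a..<a + P}" and M: "M \<ge> 1" and \<theta>: "\<theta> \<ge> 0"
    and dense: "real (card B) > \<theta> * P + M"
  shows "\<exists>i. (i + 1) * M \<le> P \<and> real (card (B \<inter> {a + i * M..<a + i * M + M})) \<ge> \<theta> * M"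
proof (rule ccontr)
  assume sparse: "\<not> ?thesis"
  define q where "q = P div M"
  let ?block = "\<lambda>i. B \<inter> {a + i * M..<a + i * M + M}"
  have "real (card (?block i)) \<le> \<theta> * M" if "i < q" for i
  proof -
    have "(i + 1) * M \<le> q * M" using that by (intro mult_le_mono1) simp
    also have "\<dots> \<le> P" unfolding q_def by simp
    finally show ?thesis using sparse by force
  qed
  then have "(\<Sum>i<q. real (card (?block i))) \<le> q * (\<theta> * M)"
    using sum_bounded_above[of "{..<q}" "\<lambda>i. real (card (?block i))"] by simp
  moreover have "real (card B) \<le> (\<Sum>i<q. real (card (?block i))) + real (P mod M)"
    using of_nat_mono[OF card_le_sum_blocks[OF B M]] unfolding q_def by simp
  moreover have "real (P mod M) < M" using M by simp
  moreover have "\<theta> * (q * M) \<le> \<theta> * P"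
    using \<theta> div_times_less_eq_dividend[of P M] unfolding q_def
    by (intro mult_left_mono) (simp_all flip: of_nat_mult)
  ultimately show False using dense by (simp add: mult_ac)
qed

lemma exists_cube_in_dense_interval:
  fixes \<delta> :: real and M P :: nat
  assumes B: "B \<subseteq> {a..<a + P}" and M: "M \<ge> 1" and \<delta>: "\<delta> > 0"
    and dense: "real (card B) > \<delta> * P + M" and dim: "(\<delta> / 4) ^ 2 ^ k * M \<ge> 1"
  shows "\<exists>x d. (\<forall>i<k. 1 \<le> d i \<and> d i < M) \<and> cube x d k \<subseteq> B"
proof -
  obtain i where "(i + 1) * M \<le> P" and block: "real (card (B \<inter> {a + i * M..<a + i * M + M})) \<ge> \<delta> * M"
    using exists_dense_block[OF B M _ dense] \<delta> by auto
  have "B \<inter> {a + i * M..<a + i * M + M} \<subseteq> {a + i * M..<a + i * M + M}" by blast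
  from hilbert_cube_lemma[OF this \<delta> block dim] show ?thesis by blast
qed

lemma exists_small_increment:
  fixes f :: "nat \<Rightarrow> nat"
  assumes mono: "\<And>j. j < k \<Longrightarrow> f j \<le> f (Suc j)" and "f k \<le> n" and "k \<ge> 1"
  shows "\<exists>j<k. k * (f (Suc j) - f j) \<le> n"
proof (rule ccontr)
  assume "\<not> ?thesis"
  then have big: "\<And>j. j < k \<Longrightarrow> n + 1 \<le> k * (f (Suc j) - f j)" by auto
  have "k * f 0 + m * (n + 1) \<le> k * f m" if "m \<le> k" for m
    using that
  proof (induction m)
    case (Suc m)
    have "k * f (Suc m) = k * f m + k * (f (Suc m) - f m)"
      using mono[of m] Suc.prems by (simp add: diff_mult_distrib2)
    then show ?case using Suc big[of m] by simp
  qed simp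
  from this[of k] have "k * (n + 1) \<le> k * f k" by simp
  also have "\<dots> \<le> k * n" using \<open>f k \<le> n\<close> by simp
  finally show False using \<open>k \<ge> 1\<close> by simp
qed

text \<open>All uses have \<open>y < h\<close>, so the subtraction on \<open>nat\<close> never truncates.\<close>

definition reflections :: "nat set \<Rightarrow> nat set \<Rightarrow> nat set" where
  "reflections C Y = (\<lambda>(h, y). 2 * h - y) ` (C \<times> Y)"

lemma reflections_Un: "reflections (C \<union> C') Y = reflections C Y \<union> reflections C' Y"
  by (auto simp: reflections_def)

lemma reflections_mono: "C \<subseteq> C' \<Longrightarrow> reflections C Y \<subseteq> reflections C' Y"
  by (auto simp: reflections_def)

lemma finite_reflections: "finite C \<Longrightarrow> finite Y \<Longrightarrow> finite (reflections C Y)"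
  by (simp add: reflections_def)

lemma reflections_subset: "C \<subseteq> {..<b} \<Longrightarrow> reflections C Y \<subseteq> {..<2 * b}"
  by (force simp: reflections_def)

lemma card_reflections_singleton:
  assumes "\<And>y. y \<in> Y \<Longrightarrow> y \<le> h"
  shows "card (reflections {h} Y) = card Y"
proof -
  have "reflections {h} Y = (\<lambda>y. 2 * h - y) ` Y" by (auto simp: reflections_def)
  moreover have "inj_on (\<lambda>y. 2 * h - y) Y"
  proof (rule inj_onI)
    fix y y' assume "y \<in> Y" "y' \<in> Y" "2 * h - y = 2 * h - y'"
    then show "y = y'" using assms[of y] assms[of y'] by arith
  qed
  ultimately show ?thesis by (simp add: card_image)
qed

lemma reflections_translate:
  assumes "\<And>h y. h \<in> C \<Longrightarrow> y \<in> Y \<Longrightarrow> y \<le> h"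
  shows "reflections ((\<lambda>z. z + d) ` C) Y = (\<lambda>z. z + 2 * d) ` reflections C Y"
proof -
  have "2 * (h + d) - y = (2 * h - y) + 2 * d" if "h \<in> C" "y \<in> Y" for h y
    using assms[OF that] by simp
  then show ?thesis unfolding reflections_def by (force simp: image_iff)
qed

lemma reflections_disjoint:
  assumes free: "\<not> has_3AP A" and "C \<subseteq> A" "Y \<subseteq> A" and less: "\<And>h y. h \<in> C \<Longrightarrow> y \<in> Y \<Longrightarrow> y < h"
  shows "A \<inter> reflections C Y = {}"
proof (rule ccontr)
  assume "A \<inter> reflections C Y \<noteq> {}"
  then obtain h y where hy: "h \<in> C" "y \<in> Y" "2 * h - y \<in> A"
    by (auto simp: reflections_def)
  have "y < h" using less[OF hy(1,2)] .
  then have "y + 2 * (h - y) = 2 * h - y" by simp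
  with \<open>y < h\<close> have "h - y \<ge> 1 \<and> y \<in> A \<and> y + (h - y) \<in> A \<and> y + 2 * (h - y) \<in> A"
    using hy assms(2,3) by auto
  then show False using free unfolding has_3AP_def by blast
qed

lemma card_Un_translate:
  fixes D :: "nat set"
  assumes "finite D"
  shows "card (D \<union> (\<lambda>z. z + s) ` D) = card D + card {z\<in>D. z + s \<notin> D}"
proof -
  have "D \<union> (\<lambda>z. z + s) ` D = D \<union> (\<lambda>z. z + s) ` {z\<in>D. z + s \<notin> D}" by auto
  moreover have "D \<inter> (\<lambda>z. z + s) ` {z\<in>D. z + s \<notin> D} = {}" by auto
  moreover have "card ((\<lambda>z. z + s) ` {z\<in>D. z + s \<notin> D}) = card {z\<in>D. z + s \<notin> D}"
    by (rule card_image) (simp add: inj_on_def)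
  ultimately show ?thesis
    using assms by (simp add: card_Un_disjoint)
qed

text \<open>Reflecting the lower part \<open>Y\<close> of an AP-free set in the points of a Hilbert cube inside
  its middle part gives sets \<open>D 0 \<subseteq> \<dots> \<subseteq> D k\<close> avoided by the set, with
  \<open>D (j + 1) = D j \<union> (D j + 2 d j)\<close>. As their sizes are bounded, some \<open>D j\<close> is nearly
  invariant under translation by \<open>2 d j\<close>.\<close>

lemma exists_nearly_invariant_reflections:
  assumes free: "\<not> has_3AP A" and Y: "Y \<subseteq> A \<inter> {..<p}"
    and cube: "cube x d k \<subseteq> A \<inter> {p..<2 * p}" and k: "k \<ge> 1"
  shows "\<exists>j<k. \<exists>D. D \<subseteq> {..<4 * p} \<and> A \<inter> D = {} \<and> card Y \<le> card D \<and>
           k * card {z\<in>D. z + 2 * d j \<notin> D} \<le> 4 * p"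
proof -
  define D where "D j = reflections (cube x d j) Y" for j
  have cube_j: "cube x d j \<subseteq> A \<inter> {p..<2 * p}" if "j \<le> k" for j
    using cube_mono[OF that] cube by blast
  have below: "y < h" if "j \<le> k" "h \<in> cube x d j" "y \<in> Y" for j h y
    using cube_j[OF that(1)] Y that(2,3) by fastforce
  have fin: "finite (D j)" for j
    unfolding D_def using Y by (intro finite_reflections finite_cube) (auto intro: finite_subset)
  have D_sub: "D j \<subseteq> {..<4 * p}" if "j \<le> k" for j
  proof -
    have "cube x d j \<subseteq> {..<2 * p}" using cube_j[OF that] by auto
    then have "D j \<subseteq> {..<2 * (2 * p)}" unfolding D_def by (rule reflections_subset)
    moreover have "2 * (2 * p) = 4 * p" by simp
    ultimately show ?thesis by (simp only:)
  qed
  have D_disj: "A \<inter> D j = {}" if "j \<le> k" for j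
    unfolding D_def using reflections_disjoint[OF free] cube_j[OF that] Y below[OF that] by blast
  have D_mono: "D i \<subseteq> D j" if "i \<le> j" for i j
    unfolding D_def by (intro reflections_mono cube_mono that)
  have card_Suc: "card (D (Suc j)) = card (D j) + card {z\<in>D j. z + 2 * d j \<notin> D j}"
    if "j < k" for j
  proof -
    have "D (Suc j) = D j \<union> (\<lambda>z. z + 2 * d j) ` D j"
      unfolding D_def using reflections_translate[of "cube x d j" Y "d j"] below[of j] that
      by (simp add: reflections_Un less_imp_le)
    then show ?thesis using card_Un_translate[OF fin] by simp
  qed
  have "card (D k) \<le> 4 * p" using card_mono[OF _ D_sub] by fastforce
  moreover have "card (D i) \<le> card (D (Suc i))" for i by (rule card_mono[OF fin D_mono]) simp
  ultimately obtain j where j: "j < k" "k * (card (D (Suc j)) - card (D j)) \<le> 4 * p"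
    using exists_small_increment[of k "\<lambda>j. card (D j)"] k by blast
  have "card Y = card (D 0)"
    unfolding D_def using below[of 0 x] by (simp add: card_reflections_singleton less_imp_le)
  also have "\<dots> \<le> card (D j)" by (rule card_mono[OF fin D_mono]) simp
  finally show ?thesis
    using j D_sub[of j] D_disj[of j] card_Suc[of j] by (intro exI[of _ j] conjI exI[of _ "D j"]) auto
qed

lemma card_le_avoiding_reflections:
  fixes \<beta> :: real
  assumes A: "A \<in> ap_free_sets n" and Y: "Y \<subseteq> A \<inter> {..<p}" and "4 * p \<le> n"
    and cube: "cube x d k \<subseteq> A \<inter> {p..<2 * p}" and k: "k \<ge> 1" and d: "\<forall>i<k. d i \<ge> 1"
    and L: "L \<ge> 1" and bound: "\<forall>S\<in>ap_free_sets L. real (card S) \<le> \<beta> * L"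
  shows "\<exists>j<k. \<exists>y e. real (card Y) \<le> y \<and> 0 \<le> e \<and> k * e \<le> n \<and>
           real (card A) \<le> \<beta> * (n - y) + L * (2 * d j + e)"
proof -
  have A_sub: "A \<subseteq> {0..<n}" and free: "\<not> has_3AP A"
    using A by (auto simp: ap_free_sets_def)
  obtain j D where j: "j < k" and D: "D \<subseteq> {..<4 * p}" "A \<inter> D = {}" "card Y \<le> card D"
    and E: "k * card {z\<in>D. z + 2 * d j \<notin> D} \<le> 4 * p"
    using exists_nearly_invariant_reflections[OF free Y cube k] by blast
  have D_sub: "D \<subseteq> {0..<n}" using D(1) \<open>4 * p \<le> n\<close> by auto
  have s: "2 * d j \<ge> 1" using d j by auto
  have "real (card A)
      \<le> \<beta> * (real n - card D) + L * (2 * d j + card {z\<in>D. z + 2 * d j \<notin> D})"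
    using card_avoiding_nearly_invariant_le[OF A_sub D_sub D(2) L card_ap_preimage_le[OF bound free s]]
    by simp
  moreover have "k * card {z\<in>D. z + 2 * d j \<notin> D} \<le> n" using E \<open>4 * p \<le> n\<close> by linarith
  then have "real k * card {z\<in>D. z + 2 * d j \<notin> D} \<le> n" using of_nat_mono by fastforce
  ultimately show ?thesis using j D(3) of_nat_mono[OF D(3)] by (intro exI[of _ j] conjI exI) auto
qed

lemma density_increment_arith_middle:
  fixes c n p L M :: real
  assumes c: "0 < c" "c \<le> 1" and L: "L \<ge> 1" and p: "p \<ge> n / 4 - 1" "p \<ge> 0"
    and M: "M \<le> c\<^sup>2 * n / (64 * L)" and n: "c\<^sup>2 * n \<ge> 192 * L"
  shows "(c - c\<^sup>2 / 64) * n - (c + c\<^sup>2 / 64) * (n - p) - 2 * L > c / 2 * p + M"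
proof -
  have "c\<^sup>2 * n > 0" using n L by linarith
  then have "n > 0" using c zero_less_mult_pos[of "c\<^sup>2" n] by simp
  have "c\<^sup>2 \<le> c" using c by (simp add: power2_eq_square mult_left_le_one_le)
  then have "c\<^sup>2 * n \<le> c * n" using \<open>n > 0\<close> by (intro mult_right_mono) auto
  moreover have "c\<^sup>2 * n / (64 * L) \<le> c\<^sup>2 * n / 64"
    using L \<open>c\<^sup>2 * n > 0\<close> by (intro divide_left_mono) auto
  then have "M \<le> c\<^sup>2 * n / 64" using M by linarith
  moreover have "c * n / 4 - c \<le> c * p"
    using mult_left_mono[OF p(1), of c] c by (simp add: algebra_simps)
  moreover have "0 \<le> c\<^sup>2 * p" using p by simp
  moreover have "(c - c\<^sup>2 / 64) * n - (c + c\<^sup>2 / 64) * (n - p) - 2 * L - (c / 2 * p + M)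
      = c * p / 2 + c\<^sup>2 * p / 64 - c\<^sup>2 * n / 32 - 2 * L - M"
    by (simp add: field_simps)
  ultimately show ?thesis using n c L by linarith
qed

lemma density_increment_arith_error:
  fixes c n L M s e k :: real
  assumes c: "0 < c" and L: "L \<ge> 1" and M: "M \<le> c\<^sup>2 * n / (64 * L)"
    and s: "s \<le> 2 * M" and e: "e \<ge> 0" "k * e \<le> n" and k: "k \<ge> 32 * L / c\<^sup>2"
  shows "L * (s + e) \<le> c\<^sup>2 * n / 16"
proof -
  have "L * s \<le> c\<^sup>2 * n / 32"
  proof -
    have "L * s \<le> 2 * (L * M)" using s L by (simp add: mult_left_mono)
    also have "L * M \<le> L * (c\<^sup>2 * n / (64 * L))" using M L by (intro mult_left_mono) auto
    finally show ?thesis using L by (simp add: mult_ac)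
  qed
  moreover have "L * e \<le> c\<^sup>2 * n / 32"
  proof -
    have "32 * L \<le> c\<^sup>2 * k" using k c by (simp add: field_simps)
    then have "32 * L * e \<le> c\<^sup>2 * k * e" using e by (simp add: mult_right_mono)
    also have "\<dots> \<le> c\<^sup>2 * n" using e by (simp add: mult.assoc mult_left_mono)
    finally show ?thesis by simp
  qed
  ultimately show ?thesis by (simp add: distrib_left)
qed

lemma density_increment_arith_final:
  fixes c n p L a y r :: real
  assumes c: "0 < c" "c \<le> 1" and L: "L \<ge> 1" and p: "p \<ge> n / 4 - 1" "p \<ge> 0"
    and n: "c\<^sup>2 * n \<ge> 192 * L"
    and a: "a > (c - c\<^sup>2 / 64) * n" "a \<le> (c + c\<^sup>2 / 64) * (n - y) + r"
    and y: "y \<ge> a - (c + c\<^sup>2 / 64) * (n - p) - L" and r: "r \<le> c\<^sup>2 * n / 16"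
  shows False
proof -
  define \<epsilon> where "\<epsilon> = c\<^sup>2 / 64"
  define \<beta> where "\<beta> = c + \<epsilon>"
  have \<epsilon>n: "\<epsilon> * n \<ge> 3 * L" "r \<le> 4 * (\<epsilon> * n)" using n r by (simp_all add: \<epsilon>_def mult_ac)
  have \<beta>: "c \<le> \<beta>" "\<beta> \<le> 2"
    using c power_le_one[of c 2] unfolding \<beta>_def \<epsilon>_def by auto
  have eq: "(c - c\<^sup>2 / 64) * n = \<beta> * n - 2 * (\<epsilon> * n)"
    "(c + c\<^sup>2 / 64) * (n - y) = \<beta> * n - \<beta> * y"
    "(c + c\<^sup>2 / 64) * (n - p) = \<beta> * n - \<beta> * p"
    by (simp_all add: \<beta>_def \<epsilon>_def field_simps)
  have "\<beta> * y \<ge> \<beta> * (\<beta> * p) - 2 * (\<beta> * (\<epsilon> * n)) - \<beta> * L"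
  proof -
    have "\<beta> * y \<ge> \<beta> * (\<beta> * p - 2 * (\<epsilon> * n) - L)"
      using a(1) y eq \<beta> c by (intro mult_left_mono) auto
    then show ?thesis by (simp add: algebra_simps)
  qed
  moreover have "\<beta> * (\<beta> * p) \<ge> c\<^sup>2 * p"
    using \<beta> c p mult_mono[of c \<beta> c \<beta>] mult_right_mono[of "c * c" "\<beta> * \<beta>" p]
    by (simp add: power2_eq_square mult.assoc)
  moreover have "c\<^sup>2 * p \<ge> 16 * (\<epsilon> * n) - 1"
  proof -
    have "c\<^sup>2 * p \<ge> c\<^sup>2 * (n / 4 - 1)" using p by (simp add: mult_left_mono)
    moreover have "c\<^sup>2 \<le> 1" using c by (simp add: power_le_one)
    ultimately show ?thesis by (simp add: \<epsilon>_def algebra_simps)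
  qed
  moreover have "\<beta> * (\<epsilon> * n) \<le> 2 * (\<epsilon> * n)" "\<beta> * L \<le> 2 * L"
    using \<beta> \<epsilon>n L by (simp_all add: mult_right_mono)
  ultimately show False using a eq y \<epsilon>n L by linarith
qed

lemma card_lower_middle_parts:
  fixes c :: real and L M n p :: nat
  assumes c: "0 < c" "c \<le> 1" and L: "L \<ge> 1"
    and upper: "\<forall>L'\<ge>L. \<forall>S\<in>ap_free_sets L'. real (card S) \<le> (c + c\<^sup>2 / 64) * L'"
    and A: "A \<in> ap_free_sets n" "real (card A) > (c - c\<^sup>2 / 64) * n"
    and p: "4 * p \<le> n" "real p \<ge> real n / 4 - 1"
    and M: "real M \<le> c\<^sup>2 * n / (64 * real L)" and n: "c\<^sup>2 * n \<ge> 192 * real L"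
  shows "real (card (A \<inter> {..<p})) \<ge> real (card A) - (c + c\<^sup>2 / 64) * (real n - p) - L"
    and "real (card (A \<inter> {p..<p + p})) > c / 2 * p + M"
proof -
  define \<beta> where "\<beta> = c + c\<^sup>2 / 64"
  have A_sub: "A \<subseteq> {0..<n}" and free: "\<not> has_3AP A" using A(1) by (auto simp: ap_free_sets_def)
  have interval: "real (card (A \<inter> {a..<a + l})) \<le> \<beta> * l + L" for a l
    using card_inter_interval_le[OF upper[folded \<beta>_def] free] c by (simp add: \<beta>_def)
  have split: "card (A \<inter> {p..<n}) = card (A \<inter> {p..<p + p}) + card (A \<inter> {2 * p..<n})"
    "card A = card (A \<inter> {..<p}) + card (A \<inter> {p..<n})"
    using A_sub p(1) card_Int_ivl_split[of 0 p n A] card_Int_ivl_split[of p "2 * p" n A]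
    by (simp_all add: Int_absorb2 mult_2 atLeast0LessThan)
  have "real (card (A \<inter> {..<p})) \<le> \<beta> * p + L"
    "real (card (A \<inter> {2 * p..<n})) \<le> \<beta> * (real n - 2 * p) + L"
    "real (card (A \<inter> {p..<n})) \<le> \<beta> * (real n - p) + L"
    using interval[of 0 p] interval[of "2 * p" "n - 2 * p"] interval[of p "n - p"] p(1)
    by (simp_all add: of_nat_diff atLeast0LessThan)
  moreover have "(c - c\<^sup>2 / 64) * n - \<beta> * (real n - p) - 2 * L > c / 2 * p + M"
    using density_increment_arith_middle[OF c _ p(2) _ M n] L unfolding \<beta>_def by simp
  moreover have "\<beta> * (real n - p) = \<beta> * p + \<beta> * (real n - 2 * p)" by (simp add: algebra_simps)
  ultimately show "real (card (A \<inter> {..<p})) \<ge> real (card A) - (c + c\<^sup>2 / 64) * (real n - p) - L"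
    and "real (card (A \<inter> {p..<p + p})) > c / 2 * p + M"
    using A(2) split unfolding \<beta>_def by linarith+
qed

text \<open>Split \<open>[0, n)\<close> at \<open>p = n/4\<close> and \<open>2p\<close>. Upper density
  \<open>c + c\<^sup>2/64\<close> on the outer parts forces the middle part to be dense, so it contains a
  Hilbert cube of dimension \<open>k\<close>; reflecting the lower part through that cube produces a
  set of size at least that of the lower part which \<open>A\<close> avoids and which is nearly
  invariant, and in its complement \<open>A\<close> again has density at most \<open>c + c\<^sup>2/64\<close>. Altogether
  \<open>A\<close> falls short of \<open>c - c\<^sup>2/64\<close>.\<close>

lemma no_dense_ap_free_set:
  fixes c :: real and L M k n :: nat
  assumes c: "0 < c" "c \<le> 1" and L: "L \<ge> 1"
    and upper: "\<forall>L'\<ge>L. \<forall>S\<in>ap_free_sets L'. real (card S) \<le> (c + c\<^sup>2 / 64) * L'"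
    and A: "A \<in> ap_free_sets n" "real (card A) > (c - c\<^sup>2 / 64) * n"
    and k: "k \<ge> 1" "real k \<ge> 32 * real L / c\<^sup>2"
    and M: "M \<ge> 1" "real M \<le> c\<^sup>2 * n / (64 * real L)" "(c / 2 / 4) ^ 2 ^ k * M \<ge> 1"
    and n: "c\<^sup>2 * n \<ge> 192 * real L"
  shows False
proof -
  define p where "p = n div 4"
  have p: "4 * p \<le> n" "real p \<ge> real n / 4 - 1" unfolding p_def by linarith+
  note parts = card_lower_middle_parts[OF c L upper A p M(2) n]
  have "A \<inter> {p..<p + p} \<subseteq> {p..<p + p}" "c / 2 > 0" using c by auto
  then obtain x d where d: "\<forall>i<k. 1 \<le> d i \<and> d i < M" and cube: "cube x d k \<subseteq> A \<inter> {p..<p + p}"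
    using exists_cube_in_dense_interval[OF _ M(1) _ parts(2) M(3)] by blast
  have cube': "cube x d k \<subseteq> A \<inter> {p..<2 * p}" using cube by (simp add: mult_2)
  have d': "\<forall>i<k. d i \<ge> 1" using d by blast
  have bound: "\<forall>S\<in>ap_free_sets L. real (card S) \<le> (c + c\<^sup>2 / 64) * L" using upper by simp
  obtain j and y e :: real where j: "j < k" "real (card (A \<inter> {..<p})) \<le> y" "0 \<le> e" "k * e \<le> n"
    "real (card A) \<le> (c + c\<^sup>2 / 64) * (n - y) + L * (2 * real (d j) + e)"
    using card_le_avoiding_reflections[OF A(1) _ p(1) cube' k(1) d' L bound] by blast
  have "2 * real (d j) \<le> 2 * real M" using d j(1) by (simp add: less_imp_le)
  then have "L * (2 * real (d j) + e) \<le> c\<^sup>2 * n / 16"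
    using density_increment_arith_error[OF c(1) _ M(2) _ j(3,4) k(2)] L by simp
  moreover have "y \<ge> real (card A) - (c + c\<^sup>2 / 64) * (real n - p) - L"
    using parts(1) j(2) by linarith
  ultimately show False
    using density_increment_arith_final[OF c _ p(2) _ n A(2) j(5)] L by simp
qed

definition ap_free_density_bound :: "real \<Rightarrow> bool" where
  "ap_free_density_bound a \<longleftrightarrow>
     (\<forall>\<^sub>F L in sequentially. \<forall>S\<in>ap_free_sets L. real (card S) \<le> a * L)"

lemma ap_free_density_bound_mono:
  assumes "ap_free_density_bound a" "a \<le> b"
  shows "ap_free_density_bound b"
proof -
  have "a * real L \<le> b * real L" for L :: nat using assms(2) by (simp add: mult_right_mono)
  then show ?thesis
    using assms(1) unfolding ap_free_density_bound_def by (elim eventually_mono) (blast intro: order_trans)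
qed

lemma ap_free_density_bound_one: "ap_free_density_bound 1"
proof -
  have "real (card S) \<le> 1 * real L" if "S \<in> ap_free_sets L" for S L
    using card_mono[of "{0..<L}" S] that by (simp add: ap_free_sets_def)
  then show ?thesis unfolding ap_free_density_bound_def by (intro always_eventually) blast
qed

lemma ap_free_density_bound_nonneg:
  assumes "ap_free_density_bound a"
  shows "a \<ge> 0"
proof -
  obtain N where N: "\<forall>L\<ge>N. \<forall>S\<in>ap_free_sets L. real (card S) \<le> a * L"
    using assms unfolding ap_free_density_bound_def eventually_sequentially by blast
  have "{} \<in> ap_free_sets (N + 1)" by (simp add: ap_free_sets_def has_3AP_def)
  then have "0 \<le> a * real (N + 1)" using N[rule_format, of "N + 1" "{}"] by simp
  then show ?thesis by (simp add: zero_le_mult_iff)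
qed

lemma real_nat_floor_bounds: "x \<ge> 0 \<Longrightarrow> real (nat \<lfloor>x\<rfloor>) \<le> x \<and> real (nat \<lfloor>x\<rfloor>) > x - 1"
  using of_int_floor_le[of x] real_of_int_floor_gt_diff_one[of x] by simp

lemma roth_density_increment:
  fixes c :: real
  assumes c: "0 < c" "c \<le> 1" and upper: "ap_free_density_bound (c + c\<^sup>2 / 64)"
  shows "ap_free_density_bound (c - c\<^sup>2 / 64)"
proof (rule ccontr)
  assume "\<not> ap_free_density_bound (c - c\<^sup>2 / 64)"
  then have lower: "\<exists>\<^sub>F n in sequentially. \<exists>A\<in>ap_free_sets n. real (card A) > (c - c\<^sup>2 / 64) * n"
    unfolding ap_free_density_bound_def not_eventually by (simp add: not_le)
  obtain N where N: "\<forall>L\<ge>N. \<forall>S\<in>ap_free_sets L. real (card S) \<le> (c + c\<^sup>2 / 64) * L"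
    using upper by (auto simp: ap_free_density_bound_def eventually_sequentially)
  define L where "L = N + 1"
  have L: "L \<ge> 1" "\<forall>L'\<ge>L. \<forall>S\<in>ap_free_sets L'. real (card S) \<le> (c + c\<^sup>2 / 64) * L'"
    using N by (auto simp: L_def)
  define k where "k = nat \<lceil>32 * real L / c\<^sup>2\<rceil> + 1"
  have k: "k \<ge> 1" "real k \<ge> 32 * real L / c\<^sup>2" unfolding k_def by linarith+
  define \<gamma> where "\<gamma> = (c / 2 / 4) ^ 2 ^ k"
  have "1 / \<gamma> > 0" using c by (simp add: \<gamma>_def)
  obtain n A where n: "n \<ge> nat \<lceil>64 * real L * (1 / \<gamma> + 3) / c\<^sup>2\<rceil>"
    and A: "A \<in> ap_free_sets n" "real (card A) > (c - c\<^sup>2 / 64) * n"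
    using lower unfolding frequently_sequentially by blast
  have "64 * real L * (1 / \<gamma> + 3) / c\<^sup>2 \<le> real n"
    using real_nat_ceiling_ge of_nat_mono[OF n] by (rule order_trans)
  then have cn: "c\<^sup>2 * n \<ge> 64 * real L * (1 / \<gamma> + 3)"
    using c by (simp add: pos_divide_le_eq mult.commute)
  define x where "x = c\<^sup>2 * n / (64 * real L)"
  have x: "x \<ge> 1 / \<gamma> + 3"
    using cn L(1) by (simp add: x_def pos_le_divide_eq mult.commute)
  define M where "M = nat \<lfloor>x\<rfloor>"
  have "x \<ge> 0" using x \<open>1 / \<gamma> > 0\<close> by linarith
  then have "real M \<le> x" "real M > x - 1"
    using real_nat_floor_bounds[of x] unfolding M_def[symmetric] by auto
  then have M: "real M \<le> c\<^sup>2 * n / (64 * real L)" "real M \<ge> 1 / \<gamma> + 2"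
    using x unfolding x_def by linarith+
  have "real M \<ge> 1" using M(2) \<open>1 / \<gamma> > 0\<close> by linarith
  then have "M \<ge> 1" by simp
  have "\<gamma> * M \<ge> \<gamma> * (1 / \<gamma> + 2)" using M(2) \<open>1 / \<gamma> > 0\<close> by (intro mult_left_mono) auto
  then have "\<gamma> * M \<ge> 1" using \<open>1 / \<gamma> > 0\<close> by (simp add: algebra_simps)
  then have "(c / 2 / 4) ^ 2 ^ k * M \<ge> 1" by (simp add: \<gamma>_def)
  moreover have "64 * real L * 3 \<le> 64 * real L * (1 / \<gamma> + 3)"
    using \<open>1 / \<gamma> > 0\<close> by (intro mult_left_mono) auto
  then have "c\<^sup>2 * n \<ge> 192 * real L" using cn by linarith
  ultimately show False using no_dense_ap_free_set[OF c L A k \<open>M \<ge> 1\<close> M(1)] by blast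
qed

text \<open>The infimum \<open>c\<close> of all density bounds vanishes: otherwise the bound
  \<open>c + c\<^sup>2/64\<close> just above it would yield the bound \<open>c - c\<^sup>2/64\<close> below it.\<close>

theorem roth: "\<delta> > 0 \<Longrightarrow> ap_free_density_bound \<delta>"
proof -
  define c where "c = Inf (Collect ap_free_density_bound)"
  have bdd: "bdd_below (Collect ap_free_density_bound)"
    by (rule bdd_belowI[of _ 0]) (simp add: ap_free_density_bound_nonneg)
  have "c \<le> 1" unfolding c_def using ap_free_density_bound_one bdd by (intro cInf_lower) auto
  have above: "ap_free_density_bound a" if "a > c" for a
  proof -
    obtain a' where "ap_free_density_bound a'" "a' < a"
      using cInf_lessD[of "Collect ap_free_density_bound" a] ap_free_density_bound_one \<open>a > c\<close>
      unfolding c_def by auto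
    then show ?thesis using ap_free_density_bound_mono by auto
  qed
  have "c \<le> 0"
  proof (rule ccontr)
    assume "\<not> c \<le> 0"
    then have c: "0 < c" "c \<le> 1" using \<open>c \<le> 1\<close> by auto
    then have "ap_free_density_bound (c - c\<^sup>2 / 64)"
      using above[of "c + c\<^sup>2 / 64"] by (intro roth_density_increment) auto
    then have "c \<le> c - c\<^sup>2 / 64" unfolding c_def using bdd by (intro cInf_lower) auto
    then show False using c by simp
  qed
  then show "\<delta> > 0 \<Longrightarrow> ap_free_density_bound \<delta>" using above by simp
qed

section \<open>Counting AP-free sets\<close>

lemma card_ap_free_sets_le_binomial_sum:
  assumes "\<forall>S\<in>ap_free_sets L. card S \<le> t"
  shows "card (ap_free_sets L) \<le> (\<Sum>j\<le>t. L choose j)"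
proof -
  have "ap_free_sets L \<subseteq> (\<Union>j\<le>t. {S. S \<subseteq> {0..<L} \<and> card S = j})"
    using assms unfolding ap_free_sets_def by auto
  then have "card (ap_free_sets L) \<le> card (\<Union>j\<le>t. {S. S \<subseteq> {0..<L} \<and> card S = j})"
    by (rule card_mono[rotated]) auto
  also have "\<dots> = (\<Sum>j\<le>t. card {S. S \<subseteq> {0..<L} \<and> card S = j})"
    by (rule card_UN_disjoint) auto
  also have "\<dots> = (\<Sum>j\<le>t. L choose j)" by (simp add: n_subsets)
  finally show ?thesis .
qed

lemma binomial_partial_sum_le:
  fixes x :: real
  assumes "0 < x" "x \<le> 1" "t \<le> L"
  shows "(\<Sum>j\<le>t. real (L choose j)) * x ^ t \<le> (1 + x) ^ L"
proof -
  have "(\<Sum>j\<le>t. real (L choose j)) * x ^ t \<le> (\<Sum>j\<le>t. real (L choose j) * x ^ j)"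
    unfolding sum_distrib_right
    by (rule sum_mono) (use assms in \<open>auto intro!: mult_left_mono power_decreasing\<close>)
  also have "\<dots> \<le> (\<Sum>j\<le>L. real (L choose j) * x ^ j)"
    by (rule sum_mono2) (use assms in auto)
  also have "\<dots> = (x + 1) ^ L" by (simp add: binomial_ring)
  finally show ?thesis by (simp add: add.commute)
qed

text \<open>Witness \<open>\<delta> = r\<^sup>2\<close> with \<open>r = min 1 (\<epsilon>/3)\<close>, using \<open>ln x \<le> x - 1\<close> twice.\<close>

lemma exists_small_entropy:
  assumes "\<epsilon> > 0"
  shows "\<exists>\<delta>::real. 0 < \<delta> \<and> \<delta> \<le> 1 \<and> ln (1 + \<delta>) - \<delta> * ln \<delta> \<le> \<epsilon>"
proof -
  define r where "r = min 1 (\<epsilon> / 3)"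
  have r: "0 < r" "r \<le> 1" "r \<le> \<epsilon> / 3" using assms by (auto simp: r_def)
  have ln_sq: "ln (1 + r\<^sup>2) \<le> r\<^sup>2"
    using r by (intro ln_le_minus_one[THEN order_trans]) (auto intro: add_pos_nonneg)
  have "ln (1 / r) \<le> 1 / r - 1" using r by (intro ln_le_minus_one) auto
  then have ln_r: "- ln r \<le> 1 / r - 1" using r by (simp add: ln_div)
  have "ln (1 + r\<^sup>2) - r\<^sup>2 * ln (r\<^sup>2) = ln (1 + r\<^sup>2) + 2 * r\<^sup>2 * (- ln r)"
    using r by (simp add: ln_realpow)
  also have "\<dots> \<le> r\<^sup>2 + 2 * r\<^sup>2 * (1 / r - 1)"
    using ln_sq ln_r by (intro add_mono mult_left_mono) auto
  also have "\<dots> = 2 * r - r\<^sup>2" using r by (simp add: power2_eq_square field_simps)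
  also have "\<dots> \<le> \<epsilon>" using r zero_le_power2[of r] by linarith
  finally show ?thesis using r by (intro exI[of _ "r\<^sup>2"]) (auto simp: power_le_one)
qed

lemma card_ap_free_sets_powr_le_at:
  assumes "\<epsilon> > 0"
  shows "\<exists>L\<ge>1. real (card (ap_free_sets L)) \<le> 2 powr (\<epsilon> * L)"
proof -
  obtain \<delta> :: real where \<delta>: "0 < \<delta>" "\<delta> \<le> 1" "ln (1 + \<delta>) - \<delta> * ln \<delta> \<le> \<epsilon> * ln 2"
    using exists_small_entropy[of "\<epsilon> * ln 2"] assms by auto
  obtain L0 where L0: "\<forall>L\<ge>L0. \<forall>S\<in>ap_free_sets L. real (card S) \<le> \<delta> * L"
    using roth[OF \<delta>(1)] unfolding ap_free_density_bound_def eventually_sequentially by blast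
  define L where "L = L0 + 1"
  define t where "t = nat \<lfloor>\<delta> * L\<rfloor>"
  have t: "real t \<le> \<delta> * L" using \<delta> by (simp add: t_def)
  also have "\<dots> \<le> L" using \<delta> by (simp add: mult_left_le_one_le)
  finally have "t \<le> L" by simp
  have "card S \<le> t" if "S \<in> ap_free_sets L" for S
  proof -
    have "real (card S) \<le> \<delta> * L" using L0[rule_format, OF _ that] by (simp add: L_def)
    then show ?thesis unfolding t_def by (simp add: le_nat_floor)
  qed
  then have "real (card (ap_free_sets L)) \<le> (\<Sum>j\<le>t. real (L choose j))"
    using card_ap_free_sets_le_binomial_sum[of L t] by (simp flip: of_nat_sum)
  also have "\<dots> \<le> (1 + \<delta>) ^ L / \<delta> ^ t"
    using binomial_partial_sum_le[OF \<delta>(1,2) \<open>t \<le> L\<close>] \<delta>(1) by (simp add: field_simps)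
  also have "\<dots> \<le> 2 powr (\<epsilon> * L)"
  proof -
    have "ln ((1 + \<delta>) ^ L / \<delta> ^ t) = L * ln (1 + \<delta>) - t * ln \<delta>"
      using \<delta>(1) by (simp add: ln_div ln_realpow)
    also have "\<dots> \<le> L * ln (1 + \<delta>) - (\<delta> * L) * ln \<delta>"
      using mult_right_mono_neg[OF t, of "ln \<delta>"] \<delta> by simp
    also have "\<dots> \<le> L * (\<epsilon> * ln 2)"
      using mult_left_mono[OF \<delta>(3), of "real L"] by (simp add: algebra_simps)
    also have "\<dots> = ln (2 powr (\<epsilon> * L))" by (simp add: ln_powr)
    finally show ?thesis using \<delta>(1) by (simp del: ln_powr)
  qed
  finally show ?thesis unfolding L_def by (intro exI[of _ "L0 + 1"]) auto
qed

lemma card_ap_free_sets_powr_le: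
  assumes "\<epsilon> > 0"
  shows "\<exists>C. \<forall>m. real (card (ap_free_sets m)) \<le> C * 2 powr (\<epsilon> * m)"
proof -
  obtain L where L: "L \<ge> 1" "real (card (ap_free_sets L)) \<le> 2 powr (\<epsilon> * L)"
    using card_ap_free_sets_powr_le_at[OF assms] by blast
  have "real (card (ap_free_sets m)) \<le> 2 powr (\<epsilon> * L) * 2 powr (\<epsilon> * m)" for m
  proof -
    define q where "q = m div L + 1"
    have "q * L = m div L * L + L" by (simp add: q_def)
    then have "m \<le> q * L" "q * L \<le> m + L"
      using L(1) div_mult_mod_eq[of m L] mod_less_divisor[of L m] by linarith+
    have "card (ap_free_sets m) \<le> card (ap_free_sets L) ^ q"
      using card_ap_free_sets_mono[OF \<open>m \<le> q * L\<close>] card_ap_free_sets_mult[of q L] by linarith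
    then have "real (card (ap_free_sets m)) \<le> (2 powr (\<epsilon> * L)) ^ q"
      using L(2) by (metis of_nat_le_iff of_nat_power order_trans power_mono of_nat_0_le_iff)
    also have "\<dots> = 2 powr (\<epsilon> * real (q * L))" by (simp add: powr_power algebra_simps)
    also have "\<dots> \<le> 2 powr (\<epsilon> * (real m + L))"
    proof -
      have "real (q * L) \<le> real m + L" using of_nat_mono[OF \<open>q * L \<le> m + L\<close>] by simp
      then show ?thesis using assms by (intro powr_mono mult_left_mono) auto
    qed
    also have "\<dots> = 2 powr (\<epsilon> * L) * 2 powr (\<epsilon> * m)" by (simp add: algebra_simps powr_add)
    finally show ?thesis .
  qed
  then show ?thesis by blast
qed

lemma card_W_set_le_card_ap_free_sets:
  assumes "N < 2 ^ a"
  shows "card (W_set \<inter> {1..N}) \<le> card (ap_free_sets (a + 2))"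
proof (rule card_inj_on_le)
  show "inj_on (\<lambda>k. A_set k \<inter> {0..<a + 2}) (W_set \<inter> {1..N})"
    by (rule inj_on_subset[OF inj_on_A_set_prefix[of a 1]]) (use assms in auto)
  show "(\<lambda>k. A_set k \<inter> {0..<a + 2}) ` (W_set \<inter> {1..N}) \<subseteq> ap_free_sets (a + 2)"
    using has_3AP_mono by (auto simp: W_set_def ap_free_sets_def)
qed (rule finite_ap_free_sets)

theorem theorem6p2:
  fixes \<epsilon> :: real
  assumes "\<epsilon> > 0"
  shows "\<exists>C. \<forall>N::nat. N \<ge> 1 \<longrightarrow> real (card (W_set \<inter> {1..N})) \<le> C * real N powr \<epsilon>"
proof -
  obtain C where C: "\<And>m. real (card (ap_free_sets m)) \<le> C * 2 powr (\<epsilon> * m)"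
    using card_ap_free_sets_powr_le[OF assms] by blast
  have "C \<ge> 0" using C[of 0] by simp
  have "real (card (W_set \<inter> {1..N})) \<le> (C * 8 powr \<epsilon>) * real N powr \<epsilon>" if "N \<ge> 1" for N
  proof -
    obtain a where a: "2 ^ a \<le> N" "N < 2 ^ (a + 1)" using ex_power_ivl1[of 2 N] \<open>N \<ge> 1\<close> by auto
    have "real (card (W_set \<inter> {1..N})) \<le> real (card (ap_free_sets (a + 1 + 2)))"
      using card_W_set_le_card_ap_free_sets[OF a(2)] by linarith
    also have "\<dots> \<le> C * 2 powr (\<epsilon> * (a + 3))" using C[of "a + 1 + 2"] by (simp add: add.commute)
    also have "2 powr (\<epsilon> * (a + 3)) = (2 ^ a * 8) powr \<epsilon>"
    proof -
      have "(2 powr (real a + 3)) powr \<epsilon> = 2 powr (\<epsilon> * (a + 3))"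
        by (simp add: powr_powr mult.commute)
      moreover have "2 powr (real a + 3) = 2 ^ a * 8" by (simp add: powr_add powr_realpow powr_numeral)
      ultimately show ?thesis by simp
    qed
    also have "C * \<dots> \<le> C * (8 * N) powr \<epsilon>"
      using a(1) \<open>C \<ge> 0\<close> assms by (intro mult_left_mono powr_mono2) auto
    finally show ?thesis by (simp add: powr_mult mult_ac)
  qed
  then show ?thesis by blast
qed

end
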